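(* Let $(X,b,m)$ be a connected combinatorial graph (i.e. $m\equiv1$, $b$ takes values in $\{0,1\}$, and $\sum_{y}b(x,y)\le\delta$ for all $x$ for some $\delta\ge0$). Let $D\subset X$ be relatively dense with covering radius $R$, and set $\Omega:=X\setminus D$. Then $$\beta_\Omega\ge\frac{1}{\mathrm{vol}[R]} .$$
   Context: Here $X$ is countable, $b:X\times X\to\{0,1\}$ symmetric with $b(x,x)=0$, $\mathrm{vol}(A)=\#A$; connected means any two points are joined by a path $(x_0,\dots,x_k)$ with $b(x_j,x_{j+1})=1$; $d$ is the combinatorial distance (minimal number of edges of a path), $B_r(x):=\{y:d(x,y)\le r\}$, and $\mathrm{vol}[s]:=\sup_{x\in X}\#B_s(x)$. The covering radius of $D$ is $\mathrm{Covr}(D):=\inf\{R>0:\bigcup_{p\in D}B_R(p)=X\}$, and $D$ is relatively dense if this is finite. For $S\subset X$, $\partial S:=\{(x,y)\in X\times X: x\in S,\ y\notin S,\ b(x,y)=1\}$, and $\beta_\Omega:=\inf\{\#\partial S/\mathrm{vol}(S):\emptyset\ne S\subset\Omega,\ \#S<\infty\}$. *)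

theory Defs
  imports "HOL-Analysis.Analysis" "HOL-Library.Countable"
begin

text \<open>Combinatorial graph on the countable type 'a (the vertex set X = UNIV),
  edge weight b given as a symmetric irreflexive relation (b x y = True iff b(x,y)=1),
  measure m = 1 (counting measure).\<close>

definition comb_graph :: "('a \<Rightarrow> 'a \<Rightarrow> bool) \<Rightarrow> bool" where
  "comb_graph b \<longleftrightarrow> (\<forall>x y. b x y \<longleftrightarrow> b y x) \<and> (\<forall>x. \<not> b x x)"

definition bounded_degree :: "('a \<Rightarrow> 'a \<Rightarrow> bool) \<Rightarrow> bool" where
  "bounded_degree b \<longleftrightarrow> (\<exists>\<delta>::nat. \<forall>x. finite {y. b x y} \<and> card {y. b x y} \<le> \<delta>)"

definition connected_graph :: "('a \<Rightarrow> 'a \<Rightarrow> bool) \<Rightarrow> bool" where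
  "connected_graph b \<longleftrightarrow> (\<forall>x y. \<exists>n. (b ^^ n) x y)"

definition gdist :: "('a \<Rightarrow> 'a \<Rightarrow> bool) \<Rightarrow> 'a \<Rightarrow> 'a \<Rightarrow> nat" where
  "gdist b x y = (LEAST n. (b ^^ n) x y)"

definition gball :: "('a \<Rightarrow> 'a \<Rightarrow> bool) \<Rightarrow> real \<Rightarrow> 'a \<Rightarrow> 'a set" where
  "gball b r x = {y. real (gdist b x y) \<le> r}"

definition volsup :: "('a \<Rightarrow> 'a \<Rightarrow> bool) \<Rightarrow> real \<Rightarrow> ereal" where
  "volsup b s = (SUP x. ereal (real (card (gball b s x))))"

definition covr_set :: "('a \<Rightarrow> 'a \<Rightarrow> bool) \<Rightarrow> 'a set \<Rightarrow> real set" where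
  "covr_set b D = {R. R > 0 \<and> (\<Union>p\<in>D. gball b R p) = UNIV}"

definition Covr :: "('a \<Rightarrow> 'a \<Rightarrow> bool) \<Rightarrow> 'a set \<Rightarrow> real" where
  "Covr b D = Inf (covr_set b D)"

definition relatively_dense :: "('a \<Rightarrow> 'a \<Rightarrow> bool) \<Rightarrow> 'a set \<Rightarrow> bool" where
  "relatively_dense b D \<longleftrightarrow> covr_set b D \<noteq> {}"

definition edge_boundary :: "('a \<Rightarrow> 'a \<Rightarrow> bool) \<Rightarrow> 'a set \<Rightarrow> ('a \<times> 'a) set" where
  "edge_boundary b S = {(x, y). x \<in> S \<and> y \<notin> S \<and> b x y}"

text \<open>Cheeger constant; infimum taken in the extended reals (inf of empty set = \<infinity>).\<close>
definition beta :: "('a \<Rightarrow> 'a \<Rightarrow> bool) \<Rightarrow> 'a set \<Rightarrow> ereal" where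
  "beta b \<Omega> = (INF S\<in>{S. S \<noteq> {} \<and> S \<subseteq> \<Omega> \<and> finite S}.
      ereal (real (card (edge_boundary b S)) / real (card S)))"

end

theory Submission
  imports Defs
begin

text \<open>Every point x of a finite set S \<subseteq> X \<setminus> D lies within distance R of some point of D, and a
  shortest path from there to x must leave S through a boundary edge (u, v) with u \<in> S
  closer to x. Hence the balls B_R(u) of the inner boundary vertices cover S, so
  #S \<le> #\<partial>S \<cdot> vol[R].\<close>

lemma relpowp_exits_set:
  assumes sym: "\<And>x y. b x y \<longleftrightarrow> b y x"
    and "(b ^^ n) p x" "p \<notin> S" "x \<in> S"
  shows "\<exists>u v m. u \<in> S \<and> v \<notin> S \<and> b u v \<and> m \<le> n \<and> (b ^^ m) u x"
  using assms(2-)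
proof (induction n arbitrary: x)
  case 0
  then show ?case by simp
next
  case (Suc n)
  from Suc.prems(1) obtain y where y: "(b ^^ n) p y" "b y x" by (auto elim: relpowp_Suc_E)
  show ?case
  proof (cases "y \<in> S")
    case True
    with Suc.IH y(1) Suc.prems(2) obtain u v m where
      uv: "u \<in> S" "v \<notin> S" "b u v" "m \<le> n" "(b ^^ m) u y" by blast
    then have "(b ^^ Suc m) u x" using y(2) by (auto intro: relpowp_Suc_I)
    with uv show ?thesis by (intro exI[of _ u] exI[of _ v] exI[of _ "Suc m"]) auto
  next
    case False
    with Suc.prems(3) y(2) sym show ?thesis
      by (intro exI[of _ x] exI[of _ y] exI[of _ 0]) auto
  qed
qed

lemma finite_relpowp:
  fixes b :: "'a \<Rightarrow> 'a \<Rightarrow> bool"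
  assumes "\<And>x. finite {y. b x y}"
  shows "finite {y. (b ^^ n) x y}"
proof (induction n)
  case 0
  have "{y. (b ^^ 0) x y} = {x}" by auto
  then show ?case by simp
next
  case (Suc n)
  have "{y. (b ^^ Suc n) x y} \<subseteq> (\<Union>z\<in>{y. (b ^^ n) x y}. {y. b z y})"
    by (auto elim: relpowp_Suc_E)
  with Suc assms show ?case by (meson finite_UN_I finite_subset)
qed

lemma relpowp_gdist:
  assumes "connected_graph b"
  shows "(b ^^ gdist b x y) x y"
  using assms unfolding gdist_def connected_graph_def by (meson LeastI_ex)

lemma gdist_le: "(b ^^ n) x y \<Longrightarrow> gdist b x y \<le> n"
  unfolding gdist_def by (rule Least_le)

lemma finite_gball:
  assumes "connected_graph b" and "\<And>x. finite {y. b x y}"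
  shows "finite (gball b r x)"
proof -
  have "gball b r x \<subseteq> (\<Union>n\<le>nat \<lfloor>r\<rfloor>. {y. (b ^^ n) x y})"
  proof
    fix y assume "y \<in> gball b r x"
    then have "gdist b x y \<le> nat \<lfloor>r\<rfloor>" by (simp add: gball_def le_nat_iff le_floor_iff)
    with relpowp_gdist[OF assms(1)] show "y \<in> (\<Union>n\<le>nat \<lfloor>r\<rfloor>. {y. (b ^^ n) x y})" by auto
  qed
  moreover have "finite (\<Union>n\<le>nat \<lfloor>r\<rfloor>. {y. (b ^^ n) x y})"
    using finite_relpowp[OF assms(2)] by auto
  ultimately show ?thesis by (rule finite_subset)
qed

text \<open>The infimum defining the covering radius is attained, because distances are natural
  numbers: the least distance from D to x is a lower bound of all admissible radii.\<close>

lemma relatively_dense_Covr: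
  assumes "relatively_dense b D"
  shows "\<exists>p\<in>D. real (gdist b p x) \<le> Covr b D"
proof -
  let ?C = "covr_set b D"
  have C: "?C \<noteq> {}" using assms by (simp add: relatively_dense_def)
  then obtain p0 where "p0 \<in> D" by (auto simp: covr_set_def)
  define k where "k = (LEAST n. \<exists>p\<in>D. gdist b p x = n)"
  obtain p where p: "p \<in> D" "gdist b p x = k"
    using LeastI[of "\<lambda>n. \<exists>p\<in>D. gdist b p x = n" "gdist b p0 x"] \<open>p0 \<in> D\<close>
    unfolding k_def by blast
  have "real k \<le> Inf ?C"
  proof (rule cInf_greatest[OF C])
    fix R assume "R \<in> ?C"
    then obtain q where q: "q \<in> D" "real (gdist b q x) \<le> R"
      by (auto simp: covr_set_def gball_def)
    then have "k \<le> gdist b q x" unfolding k_def by (intro Least_le) blast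
    with q(2) show "real k \<le> R" by linarith
  qed
  with p show ?thesis by (auto simp: Covr_def)
qed

lemma finite_edge_boundary:
  assumes "finite S" and "\<And>x. finite {y. b x y}"
  shows "finite (edge_boundary b S)"
proof (rule finite_subset)
  show "edge_boundary b S \<subseteq> Sigma S (\<lambda>x. {y. b x y})" by (auto simp: edge_boundary_def)
  show "finite (Sigma S (\<lambda>x. {y. b x y}))" using assms by auto
qed

lemma subset_UN_gball_edge_boundary:
  assumes "comb_graph b" "connected_graph b"
    and cover: "\<And>x. \<exists>p\<in>D. real (gdist b p x) \<le> R" and "S \<inter> D = {}"
  shows "S \<subseteq> (\<Union>e\<in>edge_boundary b S. gball b R (fst e))"
proof
  fix x assume x: "x \<in> S"
  obtain p where p: "p \<in> D" "real (gdist b p x) \<le> R" using cover by blast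
  have "p \<notin> S" using p(1) \<open>S \<inter> D = {}\<close> by auto
  moreover have "\<And>x y. b x y \<longleftrightarrow> b y x" using \<open>comb_graph b\<close> by (simp add: comb_graph_def)
  ultimately obtain u v m where uv: "u \<in> S" "v \<notin> S" "b u v" "m \<le> gdist b p x" "(b ^^ m) u x"
    using relpowp_exits_set relpowp_gdist[OF \<open>connected_graph b\<close>] x by metis
  have "x \<in> gball b R u" using gdist_le[OF uv(5)] uv(4) p(2) by (simp add: gball_def)
  moreover have "(u, v) \<in> edge_boundary b S" using uv by (simp add: edge_boundary_def)
  ultimately show "x \<in> (\<Union>e\<in>edge_boundary b S. gball b R (fst e))" by force
qed

lemma card_le_card_mult_of_cover:
  assumes "S \<subseteq> (\<Union>i\<in>I. A i)" "finite I" "\<And>i. finite (A i)" "\<And>i. real (card (A i)) \<le> k"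
  shows "real (card S) \<le> real (card I) * k"
proof -
  have "card S \<le> card (\<Union>i\<in>I. A i)" using assms(1-3) by (intro card_mono) auto
  also have "\<dots> \<le> (\<Sum>i\<in>I. card (A i))" using assms(2) by (rule card_UN_le)
  finally have "real (card S) \<le> (\<Sum>i\<in>I. real (card (A i)))" by (metis of_nat_le_iff of_nat_sum)
  also have "\<dots> \<le> (\<Sum>i\<in>I. k)" using assms(4) by (rule sum_mono)
  finally show ?thesis by simp
qed

lemma inverse_volsup_le_ratio:
  assumes "comb_graph b" "bounded_degree b" "connected_graph b"
    and cover: "\<And>x. \<exists>p\<in>D. real (gdist b p x) \<le> R"
    and S: "S \<noteq> {}" "finite S" "S \<inter> D = {}"
  shows "1 / volsup b R \<le> ereal (real (card (edge_boundary b S)) / real (card S))"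
proof -
  let ?E = "edge_boundary b S"
  have fin: "\<And>x. finite {y. b x y}" using \<open>bounded_degree b\<close> by (auto simp: bounded_degree_def)
  have ball_le: "ereal (real (card (gball b R x))) \<le> volsup b R" for x
    unfolding volsup_def by (rule SUP_upper) auto
  have "card S > 0" using S by (simp add: card_gt_0_iff)
  show ?thesis
  proof (cases "volsup b R")
    case (real v)
    have "real (card S) \<le> real (card ?E) * v"
    proof (rule card_le_card_mult_of_cover)
      show "S \<subseteq> (\<Union>e\<in>?E. gball b R (fst e))"
        using subset_UN_gball_edge_boundary assms(1,3) cover S(3) .
      show "finite ?E" using finite_edge_boundary S(2) fin .
      show "finite (gball b R (fst e))" for e using finite_gball assms(3) fin .
      show "real (card (gball b R (fst e))) \<le> v" for e using ball_le real by simp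
    qed
    moreover from this \<open>card S > 0\<close> have "v > 0"
      by (metis mult_nonneg_nonpos not_less of_nat_0_le_iff of_nat_0_less_iff order_le_less_trans)
    ultimately have "1 / v \<le> real (card ?E) / real (card S)"
      using \<open>card S > 0\<close> by (simp add: divide_simps mult.commute)
    with real \<open>v > 0\<close> show ?thesis by (simp add: divide_ereal_def inverse_eq_divide)
  next
    case MInf
    with ball_le[of undefined] show ?thesis by simp
  qed simp
qed

theorem proposition6p2:
  fixes b :: "'a::countable \<Rightarrow> 'a \<Rightarrow> bool" and D :: "'a set" and R :: real
  assumes "comb_graph b" and "bounded_degree b" and "connected_graph b"
    and "relatively_dense b D" and "R = Covr b D"
  shows "beta b (UNIV - D) \<ge> 1 / volsup b R"
  unfolding beta_def
proof (rule INF_greatest)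
  fix S assume "S \<in> {S. S \<noteq> {} \<and> S \<subseteq> UNIV - D \<and> finite S}"
  then have "S \<noteq> {}" "finite S" "S \<inter> D = {}" by auto
  with assms relatively_dense_Covr[OF assms(4)] show "1 / volsup b R \<le>
      ereal (real (card (edge_boundary b S)) / real (card S))"
    by (intro inverse_volsup_le_ratio) auto
qed

end
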